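(* Let $\mathbf{f}$ be a simple problem and $\mathbf{g}\subseteq\mathbf{f}$ a subproblem. Let $y\in\operatorname{Int}\mathbf{f}X^*(\mathbf{g})$. Then for every neighborhood $U\subseteq\mathbf{f}X^*(\mathbf{g})$ of $y$ and every $\mathbf{h}$ with $\emptyset\subsetneq\mathbf{h}\subsetneq\mathbf{g}$, there exists a point $v\in U$ such that $v$ $\mathbf{h}$-dominates $y$ and $y$ $(\mathbf{g}\setminus\mathbf{h})$-dominates $v$.
   Context: A problem is a finite set $\mathbf{f}=\{f_1,\dots,f_m\}$ of functions $f_i:\mathbb{R}^n\to\mathbb{R}$ together with a feasible region $X\subseteq\mathbb{R}^n$, to be minimized simultaneously; its evaluation map is $x\mapsto(f_1(x),\dots,f_m(x))$. A subproblem $\mathbf{g}\subseteq\mathbf{f}$ is a subset of these functions (including $\emptyset$ and $\mathbf{f}$), with the same $X$; its evaluation map is $x\mapsto(f_i(x))_{f_i\in\mathbf{g}}\in\mathbb{R}^{|\mathbf{g}|}$. The Pareto set $X^*(\mathbf{g})$ is the set of $x^*\in X$ for which there is no $x\in X$ with $f_i(x)\le f_i(x^* )$ for all $f_i\in\mathbf{g}$ and $f_j(x)<f_j(x^* )$ for some $f_j\in\mathbf{g}$; by convention $X^*(\emptyset)=\emptyset$. $\mathbf{f}X^*(\mathbf{g})$ denotes the image of $X^*(\mathbf{g})$ under the evaluation map of $\mathbf{f}$. For $u,v\in\mathbb{R}^m$ and $\mathbf{h}\subseteq\mathbf{f}$, $u$ $\mathbf{h}$-dominates $v$ if $u_i\le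 v_i$ for all $i$ with $f_i\in\mathbf{h}$ and $u_j<v_j$ for some $j$ with $f_j\in\mathbf{h}$. A problem $\mathbf{f}$ is simple if every subproblem $\mathbf{g}\subseteq\mathbf{f}$ with $k=|\mathbf{g}|$ objectives satisfies: (S1) $X^*(\mathbf{g})$ is homeomorphic to $\Delta^{k-1}=\{t\in[0,1]^k:\sum t_i=1\}$ (with $\Delta^{-1}=\emptyset$); (S2) the evaluation map of $\mathbf{g}$ restricted to $X^*(\mathbf{g})$ is a topological embedding into $\mathbb{R}^k$. For a simple problem, each $\mathbf{f}X^*(\mathbf{g})$ is homeomorphic to $\Delta^{|\mathbf{g}|-1}$, hence a topological manifold with boundary; $\operatorname{Int}$ and $\partial$ denote its manifold interior and manifold boundary. All sets carry the subspace topology from Euclidean space. *)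

theory Defs
  imports "HOL-Analysis.Analysis"
begin

text \<open>A problem: objectives f i :: real^'n => real indexed by the finite type 'm
  (so m = CARD('m)), feasible region X. A subproblem is a set g :: 'm set.
  Values in R^m are vectors of type real^'m.\<close>

definition eval_map :: "('m::finite \<Rightarrow> real^'n \<Rightarrow> real) \<Rightarrow> real^'n \<Rightarrow> real^'m" where
  "eval_map f x = (\<chi> i. f i x)"

text \<open>Evaluation map of subproblem g, into R^|g| realised as the coordinate
  subspace of real^'m of vectors vanishing outside g.\<close>
definition eval_sub :: "('m::finite \<Rightarrow> real^'n \<Rightarrow> real) \<Rightarrow> 'm set \<Rightarrow> real^'n \<Rightarrow> real^'m" where
  "eval_sub f g x = (\<chi> i. if i \<in> g then f i x else 0)"

definition dominates :: "'m::finite set \<Rightarrow> real^'m \<Rightarrow> real^'m \<Rightarrow> bool" where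
  "dominates h u v \<longleftrightarrow> (\<forall>i\<in>h. u$i \<le> v$i) \<and> (\<exists>j\<in>h. u$j < v$j)"

definition pareto_set :: "(real^'n) set \<Rightarrow> ('m::finite \<Rightarrow> real^'n \<Rightarrow> real) \<Rightarrow> 'm set \<Rightarrow> (real^'n) set" where
  "pareto_set X f g = (if g = {} then {} else
     {xs \<in> X. \<not> (\<exists>x\<in>X. dominates g (eval_map f x) (eval_map f xs))})"

text \<open>Standard simplex Delta^{|g|-1}, realised inside the coordinate subspace R^g.\<close>
definition simplex_on :: "'m::finite set \<Rightarrow> (real^'m) set" where
  "simplex_on g = {t. (\<forall>i. i \<notin> g \<longrightarrow> t$i = 0) \<and> (\<forall>i\<in>g. 0 \<le> t$i \<and> t$i \<le> 1) \<and> (\<Sum>i\<in>g. t$i) = 1}"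

definition simple_problem :: "(real^'n) set \<Rightarrow> ('m::finite \<Rightarrow> real^'n \<Rightarrow> real) \<Rightarrow> bool" where
  "simple_problem X f \<longleftrightarrow> (\<forall>g::'m set.
      (pareto_set X f g homeomorphic simplex_on g) \<and>
      (\<exists>k. homeomorphism (pareto_set X f g) (eval_sub f g ` pareto_set X f g) (eval_sub f g) k))"

definition manifold_interior :: "nat \<Rightarrow> 'a::topological_space set \<Rightarrow> 'a set" where
  "manifold_interior d M = {y \<in> M. \<exists>W V. openin (top_of_set M) W \<and> y \<in> W \<and>
      openin (Euclidean_space d) V \<and>
      top_of_set W homeomorphic_space subtopology (Euclidean_space d) V}"

end

theory Submission
  imports Defs "HOL-Homology.Invariance_of_Domain"
begin

text \<open>Fix i0 in g - h and map the front Z = f X*(g) to the relative coordinates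
  u_i - u_i0 (i in g), a linear space of dimension |g| - 1. Points of Z are mutually
  non-dominated in g, so two of them that differ by a constant on g coincide; together with
  the injectivity of the evaluation map on X*(g) this makes the projection injective on Z, and
  invariance of domain makes it open near the interior point y. Hence Z contains, arbitrarily
  close to y, a point v whose relative coordinates are those of y moved by -t on h, i.e.
  v_i - y_i = c - t on h and c on g - h. Non-domination between y and v forces 0 < c < t,
  which gives both dominations.\<close>

definition coord_subspace :: "'m::finite set \<Rightarrow> (real^'m) set" where
  "coord_subspace S = {x. \<forall>i. i \<notin> S \<longrightarrow> x$i = 0}"

definition relative_coords :: "'m::finite set \<Rightarrow> 'm \<Rightarrow> real^'m \<Rightarrow> real^'m" where
  "relative_coords g i0 u = (\<chi> i. if i \<in> g then u$i - u$i0 else 0)"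

lemma subspace_coord_subspace: "subspace (coord_subspace S)"
  by (auto simp: subspace_def coord_subspace_def)

lemma dim_coord_subspace: "dim (coord_subspace S) = card S"
proof -
  have "vec.dim (coord_subspace S) = card S"
    unfolding coord_subspace_def by (rule dim_substandard_cart)
  then show ?thesis
    by (metis dim_vec_eq)
qed

lemma relative_coords_in_coord_subspace: "relative_coords g i0 u \<in> coord_subspace (g - {i0})"
  by (simp add: relative_coords_def coord_subspace_def)

lemma continuous_on_relative_coords: "continuous_on S (relative_coords g i0)"
  unfolding relative_coords_def
  by (intro continuous_on_vec_lambda, case_tac "i \<in> g") (auto intro!: continuous_intros)

lemma relative_coords_eqD:
  assumes "relative_coords g i0 v = relative_coords g i0 u + w" "i \<in> g"
  shows "v$i = u$i + (v$i0 - u$i0) + w$i"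
  using arg_cong[OF assms(1), of "\<lambda>z. z$i"] assms(2) by (simp add: relative_coords_def)

lemma openin_subspace_ray:
  fixes H :: "'a::real_normed_vector set"
  assumes "openin (top_of_set H) S" "subspace H" "x \<in> S" "d \<in> H"
  obtains t where "t > 0" "x + t *\<^sub>R d \<in> S"
proof -
  obtain e where "e > 0" and e: "\<And>x'. x' \<in> H \<Longrightarrow> dist x' x < e \<Longrightarrow> x' \<in> S"
    using assms(1,3) unfolding openin_euclidean_subtopology_iff by meson
  define t where "t = e / (norm d + 1)"
  have "norm d + 1 > 0"
    by (simp add: add_nonneg_pos)
  then have "t > 0"
    using \<open>e > 0\<close> by (simp add: t_def)
  then have "t * norm d < t * (norm d + 1)"
    by simp
  also have "\<dots> = e"
    using \<open>norm d + 1 > 0\<close> by (simp add: t_def)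
  finally have "t * norm d < e" .
  moreover have "x + t *\<^sub>R d \<in> H"
    using assms openin_imp_subset by (metis subspace_add subspace_scale subsetD)
  moreover have "dist (x + t *\<^sub>R d) x = t * norm d"
    using \<open>t > 0\<close> by (simp add: dist_norm)
  ultimately show thesis
    using that[OF \<open>t > 0\<close>] e by simp
qed

lemma invariance_of_domain_chart:
  fixes p :: "'a::euclidean_space \<Rightarrow> 'b::euclidean_space"
  assumes hom: "top_of_set W homeomorphic_space subtopology (Euclidean_space n) V"
    and V: "openin (Euclidean_space n) V"
    and "subspace H" "dim H \<le> n"
    and contp: "continuous_on W p" and pim: "p ` W \<subseteq> H" and injp: "inj_on p W"
    and W1: "openin (top_of_set W) W1"
  shows "openin (top_of_set H) (p ` W1)"
proof -
  obtain \<phi> \<phi>' where \<phi>: "homeomorphic_maps (top_of_set W) (subtopology (Euclidean_space n) V) \<phi> \<phi>'"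
    using hom by (auto simp: homeomorphic_space_def)
  obtain \<psi> where \<psi>: "homeomorphic_map (top_of_set H) (Euclidean_space (dim H)) \<psi>"
    using homeomorphic_subspace_Euclidean_space_dim[OF \<open>subspace H\<close>]
    by (auto simp: homeomorphic_space_def homeomorphic_maps_map)
  have "W1 \<subseteq> W"
    using W1 openin_imp_subset by fastforce
  define V1 where "V1 = \<phi> ` W1"
  have V1_open_in_V: "openin (subtopology (Euclidean_space n) V) V1"
    unfolding V1_def using homeomorphic_map_openness[of _ _ \<phi>] \<phi> \<open>W1 \<subseteq> W\<close> W1
    by (auto simp: homeomorphic_maps_map)
  then have "openin (Euclidean_space n) V1"
    using V openin_trans_full by blast
  have "continuous_map (subtopology (Euclidean_space n) V1) (top_of_set W) \<phi>'"
    using \<phi> V1_open_in_V continuous_map_from_subtopology_mono openin_imp_subset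
    by (metis homeomorphic_maps_def)
  moreover have "continuous_map (top_of_set W) (top_of_set H) p"
    using contp pim by (simp add: image_subset_iff_funcset)
  moreover have "continuous_map (top_of_set H) (Euclidean_space (dim H)) \<psi>"
    using \<psi> homeomorphic_imp_continuous_map by blast
  moreover have \<phi>'_\<phi>: "\<phi>' (\<phi> x) = x" if "x \<in> W" for x
    using \<phi> that by (auto simp: homeomorphic_maps_map)
  moreover have "inj_on (\<psi> \<circ> p \<circ> \<phi>') V1"
  proof -
    have "inj_on \<psi> H"
      using \<psi> homeomorphic_imp_injective_map by fastforce
    then show ?thesis
      using \<phi>'_\<phi> \<open>W1 \<subseteq> W\<close> injp pim unfolding V1_def inj_on_def
      by (simp add: image_subset_iff) (metis subsetD)
  qed
  ultimately have "openin (Euclidean_space (dim H)) ((\<psi> \<circ> p \<circ> \<phi>') ` V1)"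
    using invariance_of_domain_Euclidean_space_gen[OF \<open>dim H \<le> n\<close> \<open>openin (Euclidean_space n) V1\<close>]
    by (meson continuous_map_compose)
  moreover have "(\<psi> \<circ> p \<circ> \<phi>') ` V1 = \<psi> ` p ` W1"
    unfolding V1_def using \<phi>'_\<phi> \<open>W1 \<subseteq> W\<close> by (force simp: image_comp)
  ultimately show ?thesis
    using homeomorphic_map_openness[OF \<psi>, of "p ` W1"] pim \<open>W1 \<subseteq> W\<close> by auto
qed

lemma nondominated_constant_shift_eq_0:
  assumes "\<not> dominates g u v" "\<not> dominates g v u" "g \<noteq> {}"
    and "\<And>i. i \<in> g \<Longrightarrow> v$i = u$i + c"
  shows "c = 0"
proof (rule ccontr)
  assume "c \<noteq> 0"
  then consider "c > 0" | "c < 0" by linarith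
  then show False
  proof cases
    case 1
    then have "dominates g u v"
      using assms(3,4) by (force simp: dominates_def)
    with assms(1) show False ..
  next
    case 2
    then have "dominates g v u"
      using assms(3,4) by (force simp: dominates_def)
    with assms(2) show False ..
  qed
qed

lemma nondominated_tilt_dominates:
  assumes "\<not> dominates g u v" "\<not> dominates g v u" "t > 0"
    and "{} \<subset> h" "h \<subset> g"
    and "\<And>i. i \<in> h \<Longrightarrow> v$i = u$i + c - t"
    and "\<And>i. i \<in> g - h \<Longrightarrow> v$i = u$i + c"
  shows "dominates h v u \<and> dominates (g - h) u v"
proof -
  have "c < t"
  proof (rule ccontr)
    assume "\<not> c < t"
    then have "dominates g u v"
      using assms(3-7) unfolding dominates_def
      by (smt (verit, ccfv_SIG) Diff_iff psubset_imp_ex_mem)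
    with assms(1) show False ..
  qed
  moreover have "c > 0"
  proof (rule ccontr)
    assume "\<not> c > 0"
    then have "dominates g v u"
      using assms(3-7) unfolding dominates_def
      by (smt (verit, ccfv_SIG) Diff_iff psubset_imp_ex_mem subsetD psubset_imp_subset)
    with assms(2) show False ..
  qed
  ultimately show ?thesis
    using assms(4-7) unfolding dominates_def
    by (smt (verit, ccfv_SIG) Diff_iff psubset_imp_ex_mem)
qed

lemma pareto_front_not_dominates:
  assumes "a \<in> eval_map f ` pareto_set X f g" "b \<in> eval_map f ` pareto_set X f g"
  shows "\<not> dominates g a b"
  using assms by (auto simp: pareto_set_def split: if_splits)

lemma inj_on_relative_coords_pareto_front:
  assumes inj: "inj_on (eval_sub f g) (pareto_set X f g)" and "i0 \<in> g"
  shows "inj_on (relative_coords g i0) (eval_map f ` pareto_set X f g)"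
proof (rule inj_onI)
  fix u v
  assume u: "u \<in> eval_map f ` pareto_set X f g" and v: "v \<in> eval_map f ` pareto_set X f g"
    and "relative_coords g i0 u = relative_coords g i0 v"
  then have shift: "v$i = u$i + (v$i0 - u$i0)" if "i \<in> g" for i
    using relative_coords_eqD[of g i0 v u 0 i] that by simp
  then have "v$i0 - u$i0 = 0"
    using nondominated_constant_shift_eq_0 pareto_front_not_dominates[OF u v]
      pareto_front_not_dominates[OF v u] \<open>i0 \<in> g\<close> by blast
  then have same_on_g: "u$i = v$i" if "i \<in> g" for i
    using shift that by simp
  obtain xu xv where "xu \<in> pareto_set X f g" "u = eval_map f xu"
    and "xv \<in> pareto_set X f g" "v = eval_map f xv"
    using u v by blast
  moreover from this have "eval_sub f g xu = eval_sub f g xv"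
    using same_on_g by (auto simp: eval_sub_def eval_map_def vec_eq_iff)
  ultimately show "u = v"
    using inj_onD[OF inj] by metis
qed

lemma relative_coords_nhd_in_coord_subspace:
  assumes "simple_problem X f" and "i0 \<in> g"
    and y: "y \<in> manifold_interior (card g - 1) (eval_map f ` pareto_set X f g)"
    and W': "openin (top_of_set (eval_map f ` pareto_set X f g)) W'" "y \<in> W'"
  obtains S where "openin (top_of_set (coord_subspace (g - {i0}))) S"
    and "relative_coords g i0 y \<in> S" "S \<subseteq> relative_coords g i0 ` W'"
proof -
  let ?Z = "eval_map f ` pareto_set X f g"
  obtain W V where W: "openin (top_of_set ?Z) W" "y \<in> W"
    and V: "openin (Euclidean_space (card g - 1)) V"
    and chart: "top_of_set W homeomorphic_space subtopology (Euclidean_space (card g - 1)) V"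
    using y unfolding manifold_interior_def by blast
  have "W \<subseteq> ?Z"
    using W openin_imp_subset by fastforce
  have "openin (top_of_set W) (W \<inter> W')"
    using openin_subset_trans[of ?Z "W \<inter> W'" W] W W' \<open>W \<subseteq> ?Z\<close> by blast
  moreover have "inj_on (relative_coords g i0) W"
  proof -
    obtain k where "homeomorphism (pareto_set X f g) (eval_sub f g ` pareto_set X f g) (eval_sub f g) k"
      using \<open>simple_problem X f\<close> unfolding simple_problem_def by blast
    then have "inj_on (eval_sub f g) (pareto_set X f g)"
      by (metis homeomorphism_def inj_on_inverseI)
    then show ?thesis
      using inj_on_relative_coords_pareto_front \<open>i0 \<in> g\<close> \<open>W \<subseteq> ?Z\<close> inj_on_subset by blast
  qed
  moreover have "dim (coord_subspace (g - {i0})) \<le> card g - 1"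
    using \<open>i0 \<in> g\<close> by (simp add: dim_coord_subspace)
  moreover have "relative_coords g i0 ` W \<subseteq> coord_subspace (g - {i0})"
    using relative_coords_in_coord_subspace by blast
  ultimately have "openin (top_of_set (coord_subspace (g - {i0}))) (relative_coords g i0 ` (W \<inter> W'))"
    using invariance_of_domain_chart[OF chart V subspace_coord_subspace _ continuous_on_relative_coords]
    by blast
  then show thesis
    using that W W' by blast
qed

theorem corollary2:
  fixes X :: "(real^'n) set" and f :: "'m::finite \<Rightarrow> real^'n \<Rightarrow> real"
    and g :: "'m set" and y :: "real^'m"
  assumes "simple_problem X f"
    and "y \<in> manifold_interior (card g - 1) (eval_map f ` pareto_set X f g)"
  shows "\<forall>U h. U \<subseteq> eval_map f ` pareto_set X f g \<and>
           (\<exists>W. openin (top_of_set (eval_map f ` pareto_set X f g)) W \<and> y \<in> W \<and> W \<subseteq> U) \<and>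
           {} \<subset> h \<and> h \<subset> g
         \<longrightarrow> (\<exists>v\<in>U. dominates h v y \<and> dominates (g - h) y v)"
proof (intro allI impI, elim conjE exE)
  fix U h W
  assume U: "U \<subseteq> eval_map f ` pareto_set X f g"
    and W: "openin (top_of_set (eval_map f ` pareto_set X f g)) W" "y \<in> W" "W \<subseteq> U"
    and h: "{} \<subset> h" "h \<subset> g"
  then obtain i0 where "i0 \<in> g" "i0 \<notin> h"
    by blast
  then obtain S where S: "openin (top_of_set (coord_subspace (g - {i0}))) S"
    "relative_coords g i0 y \<in> S" "S \<subseteq> relative_coords g i0 ` W"
    using relative_coords_nhd_in_coord_subspace[OF assms(1) \<open>i0 \<in> g\<close> assms(2) W(1,2)] by blast
  define d :: "real^'m" where "d = (\<chi> i. if i \<in> h then -1 else 0)"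
  have "d \<in> coord_subspace (g - {i0})"
    using h \<open>i0 \<notin> h\<close> by (auto simp: d_def coord_subspace_def)
  then obtain t where "t > 0" "relative_coords g i0 y + t *\<^sub>R d \<in> S"
    using openin_subspace_ray[OF S(1) subspace_coord_subspace S(2)] by blast
  then obtain v where "v \<in> W" and v: "relative_coords g i0 v = relative_coords g i0 y + t *\<^sub>R d"
    using S(3) by (metis imageE subsetD)
  have "v \<in> eval_map f ` pareto_set X f g" "y \<in> eval_map f ` pareto_set X f g"
    using U W(2,3) \<open>v \<in> W\<close> by auto
  then have "\<not> dominates g y v" "\<not> dominates g v y"
    using pareto_front_not_dominates by blast+
  then have "dominates h v y \<and> dominates (g - h) y v"
  proof (rule nondominated_tilt_dominates[OF _ _ \<open>t > 0\<close> h])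
    show "v$i = y$i + (v$i0 - y$i0) - t" if "i \<in> h" for i
      using relative_coords_eqD[OF v] that h by (auto simp: d_def)
    show "v$i = y$i + (v$i0 - y$i0)" if "i \<in> g - h" for i
      using relative_coords_eqD[OF v] that by (auto simp: d_def)
  qed
  then show "\<exists>v\<in>U. dominates h v y \<and> dominates (g - h) y v"
    using \<open>v \<in> W\<close> W(3) by blast
qed

end
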